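(* Let $\mathbb{F}\in\{\mathbb{R},\mathbb{C}\}$, $A\in\mathbb{F}^{m\times n}$, $b\in\mathbb{F}^m$ and $f:\mathbb{F}^n\to[0,\infty]$. A point $x'$ is a stationary point of $\mathcal{K}_{reg}(x)=\mathcal{Q}_2(f)(x)+\|Ax-b\|_2^2$ if and only if $$x'\in\operatorname*{argmin}_x\ \mathcal{Q}_2(f)(x)+\|x-z'\|_2^2,\qquad\text{where } z'=(I-A^*A)x'+A^*b.$$
   Context: $\mathcal{Q}_2(f)$ is the quadratic envelope of $f$: $\mathcal{Q}_2(f)(x)=\breve h(x)-\|x\|^2$, where $\breve h$ is the lower semicontinuous convex envelope of $h(x)=f(x)+\|x\|^2$. $A^*$ is the conjugate transpose, $\langle x,y\rangle=\sum_i x_i\overline{y_i}$, norms Euclidean. A stationary point of a function $g$ is a point $x$ with $0$ in the Fréchet subdifferential $\hat\partial g(x)$, i.e. the set of $v$ with $\liminf_{y\to x,y\ne x}(g(y)-g(x)-\mathrm{Re}\langle v,y-x\rangle)/\|y-x\|\ge0$. *)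

theory Defs
  imports "HOL-Analysis.Analysis"
begin

(* Extended-real-valued functions on a real inner product space
   (R^n, or C^n viewed as R^{2n} with inner product Re<x,y>). *)

definition ereal_convex :: "('v::real_vector \<Rightarrow> ereal) \<Rightarrow> bool" where
  "ereal_convex g \<longleftrightarrow> convex {(x, r::real). g x \<le> ereal r}"

definition ereal_lsc :: "('v::topological_space \<Rightarrow> ereal) \<Rightarrow> bool" where
  "ereal_lsc g \<longleftrightarrow> (\<forall>x. g x \<le> Liminf (at x) g)"

definition lsc_convex_envelope :: "('v::real_normed_vector \<Rightarrow> ereal) \<Rightarrow> 'v \<Rightarrow> ereal" where
  "lsc_convex_envelope h x =
     (SUP g \<in> {g. ereal_convex g \<and> ereal_lsc g \<and> (\<forall>y. g y \<le> h y)}. g x)"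

definition Q2 :: "('v::real_normed_vector \<Rightarrow> ereal) \<Rightarrow> 'v \<Rightarrow> ereal" where
  "Q2 f x = lsc_convex_envelope (\<lambda>y. f y + ereal ((norm y)\<^sup>2)) x - ereal ((norm x)\<^sup>2)"

(* Frechet subdifferential; empty where g is not finite (standard convention).
   For C^n the real inner product v \<bullet> w equals Re<v,w>. *)
definition frechet_subdiff :: "('v::real_inner \<Rightarrow> ereal) \<Rightarrow> 'v \<Rightarrow> 'v set" where
  "frechet_subdiff g x = {v. \<bar>g x\<bar> \<noteq> \<infinity> \<and>
     Liminf (at x) (\<lambda>y. (g y - g x - ereal (v \<bullet> (y - x))) / ereal (norm (y - x))) \<ge> 0}"

definition stationary_point :: "('v::real_inner \<Rightarrow> ereal) \<Rightarrow> 'v \<Rightarrow> bool" where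
  "stationary_point g x \<longleftrightarrow> 0 \<in> frechet_subdiff g x"

(* argmin in the sense of Rockafellar-Wets: empty if inf g = +infinity *)
definition ereal_argmin :: "('v \<Rightarrow> ereal) \<Rightarrow> 'v set" where
  "ereal_argmin g = {x. g x = (INF y. g y) \<and> (INF y. g y) \<noteq> \<infinity>}"

definition conj_transpose :: "complex^'n^'m \<Rightarrow> complex^'m^'n" where
  "conj_transpose A = (\<chi> i j. cnj (A $ j $ i))"

end

theory Submission
  imports Defs
begin

(* Let h' be the lsc convex envelope of f + |.|^2, so that Q2 f = h' - |.|^2, and let
   z' = x' - A^*(A x' - b).  The objective differs from G = Q2 f + |. - z'|^2 by the smooth
   function s x = |A x - b|^2 - |x - z'|^2, and z' is exactly the point for which the
   derivative of s at x' vanishes; so both functions have the same Frechet subdifferential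
   at x'.  The quadratic terms of G cancel, G = h' + (affine function) is convex, and for a
   convex function Frechet stationarity is the same as global minimality. *)

lemma Liminf_le_Liminf_add_tendsto_zero:
  fixes g :: "'a \<Rightarrow> ereal" and w :: "'a \<Rightarrow> real"
  assumes "(w \<longlongrightarrow> 0) F"
  shows "Liminf F g \<le> Liminf F (\<lambda>y. g y + ereal (w y))"
proof (unfold le_Liminf_iff, intro allI impI)
  fix C assume "C < Liminf F g"
  then obtain r2 where r2: "C < ereal r2" "ereal r2 < Liminf F g"
    using ereal_dense2 by blast
  then obtain r1 where r1: "C < ereal r1" "r1 < r2"
    using ereal_dense2 by fastforce
  have "\<forall>\<^sub>F y in F. ereal r2 < g y"
    using r2(2) by (rule less_LiminfD)
  moreover have "\<forall>\<^sub>F y in F. \<bar>w y\<bar> < r2 - r1"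
    using assms r1(2) by (auto simp: tendsto_iff dist_real_def)
  ultimately show "\<forall>\<^sub>F y in F. C < g y + ereal (w y)"
  proof eventually_elim
    case (elim y)
    then have "ereal r1 < g y + ereal (w y)"
      by (cases "g y") (auto simp: abs_less_iff)
    then show ?case
      using r1(1) by (rule less_trans[rotated])
  qed
qed

lemma Liminf_add_tendsto_zero:
  fixes g :: "'a \<Rightarrow> ereal" and w :: "'a \<Rightarrow> real"
  assumes "(w \<longlongrightarrow> 0) F"
  shows "Liminf F (\<lambda>y. g y + ereal (w y)) = Liminf F g"
proof (rule antisym)
  have "((\<lambda>y. - w y) \<longlongrightarrow> 0) F"
    using tendsto_minus[OF assms] by simp
  then have "Liminf F (\<lambda>y. g y + ereal (w y)) \<le> Liminf F (\<lambda>y. g y + ereal (w y) + ereal (- w y))"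
    by (rule Liminf_le_Liminf_add_tendsto_zero)
  also have "(\<lambda>y. g y + ereal (w y) + ereal (- w y)) = g"
  proof
    show "g y + ereal (w y) + ereal (- w y) = g y" for y
      by (cases "g y") auto
  qed
  finally show "Liminf F (\<lambda>y. g y + ereal (w y)) \<le> Liminf F g" .
qed (rule Liminf_le_Liminf_add_tendsto_zero[OF assms])

lemma frechet_subdiff_add_zero_derivative:
  fixes g :: "'v::real_inner \<Rightarrow> ereal"
  assumes "(s has_derivative (\<lambda>_. 0)) (at x)"
  shows "frechet_subdiff (\<lambda>y. g y + ereal (s y)) x = frechet_subdiff g x"
proof (cases "\<bar>g x\<bar> = \<infinity>")
  case True
  then show ?thesis by (auto simp: frechet_subdiff_def)
next
  case False
  then obtain a where a: "g x = ereal a" by auto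
  define dq where "dq h v y = (h y - h x - ereal (v \<bullet> (y - x))) / ereal (norm (y - x))"
    for h :: "'v \<Rightarrow> ereal" and v y
  have subdiff_dq: "frechet_subdiff h x = {v. \<bar>h x\<bar> \<noteq> \<infinity> \<and> 0 \<le> Liminf (at x) (dq h v)}" for h
    by (simp add: frechet_subdiff_def dq_def[abs_def])
  have w: "((\<lambda>y. (s y - s x) / norm (y - x)) \<longlongrightarrow> 0) (at x)"
    using assms unfolding has_derivative_at_within by (simp add: divide_inverse_commute)
  have "dq (\<lambda>y. g y + ereal (s y)) v y = dq g v y + ereal ((s y - s x) / norm (y - x))"
    if "y \<noteq> x" for v y
    using that by (cases "g y") (simp_all add: dq_def a diff_divide_distrib add_divide_distrib)
  then have "Liminf (at x) (dq (\<lambda>y. g y + ereal (s y)) v)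
      = Liminf (at x) (\<lambda>y. dq g v y + ereal ((s y - s x) / norm (y - x)))" for v
    by (intro Liminf_eq) (simp add: eventually_at_filter)
  then show ?thesis
    using a by (simp add: subdiff_dq Liminf_add_tendsto_zero[OF w])
qed

lemma ereal_convex_iff:
  "ereal_convex g \<longleftrightarrow>
     (\<forall>u v a b t. g u \<le> ereal a \<longrightarrow> g v \<le> ereal b \<longrightarrow> 0 \<le> t \<longrightarrow> t \<le> 1 \<longrightarrow>
        g ((1 - t) *\<^sub>R u + t *\<^sub>R v) \<le> ereal ((1 - t) * a + t * b))"
  unfolding ereal_convex_def convex_alt by auto

lemma ereal_convex_SUP:
  assumes "\<And>g. g \<in> S \<Longrightarrow> ereal_convex g"
  shows "ereal_convex (\<lambda>x. SUP g\<in>S. g x)"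
proof -
  have "{(x, r). (SUP g\<in>S. g x) \<le> ereal r} = (\<Inter>g\<in>S. {(x, r). g x \<le> ereal r})"
    by (auto simp: SUP_le_iff)
  then show ?thesis
    using assms unfolding ereal_convex_def by (auto intro!: convex_INT)
qed

lemma ereal_convex_lsc_convex_envelope: "ereal_convex (lsc_convex_envelope h)"
  unfolding lsc_convex_envelope_def[abs_def] by (rule ereal_convex_SUP) auto

lemma lsc_convex_envelope_nonneg:
  assumes "\<And>y. 0 \<le> h y"
  shows "0 \<le> lsc_convex_envelope h x"
proof -
  have "ereal_convex (\<lambda>_. 0)"
    unfolding ereal_convex_iff by auto
  moreover have "ereal_lsc (\<lambda>_. 0)"
    unfolding ereal_lsc_def by (auto intro: Liminf_bounded)
  ultimately show ?thesis
    using assms unfolding lsc_convex_envelope_def by (intro SUP_upper2[of "\<lambda>_. 0"]) auto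
qed

lemma ereal_convex_add_affine:
  assumes "ereal_convex g" "linear l"
  shows "ereal_convex (\<lambda>x. g x + ereal (l x + c))"
  unfolding ereal_convex_iff
proof (intro allI impI)
  fix a b t :: real and u v
  assume u: "g u + ereal (l u + c) \<le> ereal a" and v: "g v + ereal (l v + c) \<le> ereal b"
    and t: "0 \<le> t" "t \<le> 1"
  have "g u \<le> ereal (a - l u - c)" "g v \<le> ereal (b - l v - c)"
    using u v by (cases "g u"; cases "g v"; simp)+
  then have "g ((1 - t) *\<^sub>R u + t *\<^sub>R v) \<le> ereal ((1 - t) * (a - l u - c) + t * (b - l v - c))"
    using assms(1) t unfolding ereal_convex_iff by blast
  moreover have "l ((1 - t) *\<^sub>R u + t *\<^sub>R v) = (1 - t) * l u + t * l v"
    using assms(2) by (simp add: linear_add linear_scale)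
  ultimately show "g ((1 - t) *\<^sub>R u + t *\<^sub>R v) + ereal (l ((1 - t) *\<^sub>R u + t *\<^sub>R v) + c)
      \<le> ereal ((1 - t) * a + t * b)"
    by (cases "g ((1 - t) *\<^sub>R u + t *\<^sub>R v)") (simp_all add: algebra_simps)
qed

lemma ereal_argmin_iff: "x \<in> ereal_argmin g \<longleftrightarrow> g x \<noteq> \<infinity> \<and> (\<forall>y. g x \<le> g y)"
proof
  assume "x \<in> ereal_argmin g"
  then show "g x \<noteq> \<infinity> \<and> (\<forall>y. g x \<le> g y)"
    unfolding ereal_argmin_def by (metis (mono_tags) INF_lower UNIV_I mem_Collect_eq)
next
  assume "g x \<noteq> \<infinity> \<and> (\<forall>y. g x \<le> g y)"
  moreover from this have "g x = (INF y. g y)"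
    by (intro antisym INF_greatest) (auto intro: INF_lower)
  ultimately show "x \<in> ereal_argmin g"
    unfolding ereal_argmin_def by simp
qed

lemma stationary_point_if_minimum:
  assumes "\<bar>g x\<bar> \<noteq> \<infinity>" "\<And>y. g x \<le> g y"
  shows "stationary_point g x"
proof -
  obtain a where a: "g x = ereal a"
    using assms(1) by auto
  have "0 \<le> (g y - g x - ereal (0 \<bullet> (y - x))) / ereal (norm (y - x))" if "y \<noteq> x" for y
    using assms(2)[of y] that by (cases "g y") (simp_all add: a)
  then have "0 \<le> Liminf (at x) (\<lambda>y. (g y - g x - ereal (0 \<bullet> (y - x))) / ereal (norm (y - x)))"
    by (intro Liminf_bounded) (simp add: eventually_at_filter)
  then show ?thesis
    using assms(1) unfolding stationary_point_def frechet_subdiff_def by simp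
qed

lemma ereal_convex_difference_quotient_le:
  assumes "ereal_convex g" "g x = ereal gx" "g y \<le> ereal a" "y \<noteq> x" "0 < t" "t \<le> 1"
  shows "(g ((1 - t) *\<^sub>R x + t *\<^sub>R y) - g x) / ereal (t * norm (y - x)) \<le> ereal ((a - gx) / norm (y - x))"
proof -
  have "g ((1 - t) *\<^sub>R x + t *\<^sub>R y) \<le> ereal ((1 - t) * gx + t * a)"
    using assms unfolding ereal_convex_iff by simp
  then have "(g ((1 - t) *\<^sub>R x + t *\<^sub>R y) - g x) / ereal (t * norm (y - x))
      \<le> ereal ((1 - t) * gx + t * a - gx) / ereal (t * norm (y - x))"
    using assms(2,4,5) by (intro ereal_divide_right_mono) (cases "g ((1 - t) *\<^sub>R x + t *\<^sub>R y)"; simp)+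
  also have "\<dots> = ereal ((a - gx) / norm (y - x))"
    using assms(4,5) by (simp add: field_simps)
  finally show ?thesis .
qed

lemma stationary_point_imp_minimum_if_ereal_convex:
  assumes "ereal_convex g" "stationary_point g x"
  shows "g x \<le> g y"
proof (rule ccontr)
  \<comment> \<open>If \<open>g y < g x\<close>, convexity keeps the difference quotients of \<open>g\<close> along the segment
     from \<open>x\<close> to \<open>y\<close> below a fixed negative bound, however close to \<open>x\<close>.\<close>
  assume "\<not> g x \<le> g y"
  moreover obtain gx where gx: "g x = ereal gx"
    using assms(2) unfolding stationary_point_def frechet_subdiff_def by auto
  ultimately obtain a where a: "g y \<le> ereal a" "a < gx"
    using ereal_dense2[of "g y" "g x"] by (auto simp: not_le intro: less_imp_le)
  then have "y \<noteq> x"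
    using gx by auto
  define d where "d = norm (y - x)"
  define c where "c = (gx - a) / d"
  have "d > 0" "c > 0"
    using \<open>y \<noteq> x\<close> a by (simp_all add: d_def c_def)
  define Q where "Q p = (g p - g x - ereal (0 \<bullet> (p - x))) / ereal (norm (p - x))" for p
  have "0 \<le> Liminf (at x) Q"
    using assms(2) unfolding stationary_point_def frechet_subdiff_def Q_def[abs_def] by simp
  moreover have "ereal (- c / 2) < 0"
    using \<open>c > 0\<close> by simp
  ultimately have "\<forall>\<^sub>F p in at x. ereal (- c / 2) < Q p"
    by (intro less_LiminfD) (rule less_le_trans)
  then obtain \<delta> where "\<delta> > 0" and \<delta>: "\<And>p. p \<noteq> x \<Longrightarrow> dist p x < \<delta> \<Longrightarrow> ereal (- c / 2) < Q p"
    unfolding eventually_at by auto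
  define t where "t = min 1 (\<delta> / (2 * d))"
  have t: "0 < t" "t \<le> 1"
    using \<open>\<delta> > 0\<close> \<open>d > 0\<close> by (auto simp: t_def)
  have "t * d \<le> \<delta> / (2 * d) * d"
    using \<open>d > 0\<close> by (intro mult_right_mono) (auto simp: t_def)
  then have "t * d < \<delta>"
    using \<open>\<delta> > 0\<close> \<open>d > 0\<close> by simp
  define p where "p = (1 - t) *\<^sub>R x + t *\<^sub>R y"
  have norm_p: "norm (p - x) = t * d"
    using t by (simp add: p_def d_def algebra_simps flip: scaleR_diff_right)
  then have "p \<noteq> x" "dist p x < \<delta>"
    using t \<open>d > 0\<close> \<open>t * d < \<delta>\<close> by (auto simp: dist_norm)
  have "Q p = (g p - g x) / ereal (t * d)"
    by (simp add: Q_def norm_p)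
  also have "\<dots> \<le> ereal (- c)"
    using ereal_convex_difference_quotient_le[OF assms(1) gx a(1) \<open>y \<noteq> x\<close> t]
    by (simp add: p_def d_def c_def minus_divide_left)
  finally have "Q p \<le> ereal (- c)" .
  moreover have "ereal (- c / 2) < Q p"
    using \<delta> \<open>p \<noteq> x\<close> \<open>dist p x < \<delta>\<close> by blast
  ultimately show False
    using \<open>c > 0\<close> by (cases "Q p") auto
qed

lemma stationary_point_iff_ereal_argmin_if_ereal_convex:
  assumes "ereal_convex g" "g x \<noteq> -\<infinity>"
  shows "stationary_point g x \<longleftrightarrow> x \<in> ereal_argmin g"
proof
  assume stationary: "stationary_point g x"
  then have "g x \<noteq> \<infinity>"
    unfolding stationary_point_def frechet_subdiff_def by auto
  then show "x \<in> ereal_argmin g"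
    using stationary_point_imp_minimum_if_ereal_convex[OF assms(1) stationary]
    unfolding ereal_argmin_iff by blast
next
  assume "x \<in> ereal_argmin g"
  then show "stationary_point g x"
    using assms(2) by (intro stationary_point_if_minimum) (auto simp: ereal_argmin_iff)
qed

lemma stationary_point_least_squares_iff_ereal_argmin:
  fixes H :: "'v::real_inner \<Rightarrow> ereal" and L :: "'v \<Rightarrow> 'w::real_inner"
  assumes "ereal_convex H" "H x' \<noteq> -\<infinity>" "bounded_linear L"
    and adjoint: "\<And>u w. L u \<bullet> w = u \<bullet> L' w"
  shows "stationary_point (\<lambda>x. H x - ereal ((norm x)\<^sup>2) + ereal ((norm (L x - b))\<^sup>2)) x' \<longleftrightarrow>
    x' \<in> ereal_argmin (\<lambda>x. H x - ereal ((norm x)\<^sup>2) + ereal ((norm (x - (x' - L' (L x' - b))))\<^sup>2))"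
proof -
  define z where "z = x' - L' (L x' - b)"
  define G where "G x = H x - ereal ((norm x)\<^sup>2) + ereal ((norm (x - z))\<^sup>2)" for x
  define s where "s x = (norm (L x - b))\<^sup>2 - (norm (x - z))\<^sup>2" for x
  have G_affine: "G = (\<lambda>x. H x + ereal (-2 * (x \<bullet> z) + (norm z)\<^sup>2))"
  proof
    show "G x = H x + ereal (-2 * (x \<bullet> z) + (norm z)\<^sup>2)" for x
      by (cases "H x") (simp_all add: G_def power2_norm_eq_inner inner_diff_left inner_diff_right
          inner_commute algebra_simps)
  qed
  have "linear (\<lambda>x. -2 * (x \<bullet> z))"
    by (simp add: linear_iff inner_add_left algebra_simps)
  then have "ereal_convex G"
    unfolding G_affine by (rule ereal_convex_add_affine[OF assms(1)])
  have "G x' \<noteq> -\<infinity>"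
    using assms(2) by (simp add: G_affine)
  have K_eq: "(\<lambda>x. H x - ereal ((norm x)\<^sup>2) + ereal ((norm (L x - b))\<^sup>2)) = (\<lambda>x. G x + ereal (s x))"
  proof
    show "H x - ereal ((norm x)\<^sup>2) + ereal ((norm (L x - b))\<^sup>2) = G x + ereal (s x)" for x
      by (cases "H x") (simp_all add: G_def s_def)
  qed
  have "(s has_derivative (\<lambda>h. 2 * (L h \<bullet> (L x' - b)) - 2 * (h \<bullet> (x' - z)))) (at x')"
    unfolding s_def[abs_def] power2_norm_eq_inner
    by (auto intro!: derivative_eq_intros bounded_linear.has_derivative[OF assms(3)]
        simp: inner_commute algebra_simps)
  moreover have "(\<lambda>h. 2 * (L h \<bullet> (L x' - b)) - 2 * (h \<bullet> (x' - z))) = (\<lambda>_. 0)"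
    by (simp add: adjoint z_def)
  ultimately have "(s has_derivative (\<lambda>_. 0)) (at x')"
    by simp
  then have "stationary_point (\<lambda>x. G x + ereal (s x)) x' \<longleftrightarrow> stationary_point G x'"
    unfolding stationary_point_def by (simp add: frechet_subdiff_add_zero_derivative)
  also have "\<dots> \<longleftrightarrow> x' \<in> ereal_argmin G"
    by (rule stationary_point_iff_ereal_argmin_if_ereal_convex) fact+
  finally show ?thesis
    unfolding K_eq G_def[abs_def] z_def .
qed

lemma inner_matrix_vector_transpose:
  fixes A :: "real^'n^'m"
  shows "(A *v u) \<bullet> w = u \<bullet> (transpose A *v w)"
  by (metis dot_lmul_matrix inner_commute transpose_matrix_vector)

lemma inner_matrix_vector_conj_transpose:
  fixes A :: "complex^'n^'m"
  shows "(A *v u) \<bullet> w = u \<bullet> (conj_transpose A *v w)"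
proof -
  have swap_cnj: "(a * p) \<bullet> q = p \<bullet> (cnj a * q)" for a p q :: complex
    by (simp add: inner_complex_def algebra_simps)
  have "(A *v u) \<bullet> w = (\<Sum>i\<in>UNIV. \<Sum>j\<in>UNIV. (A $ i $ j * u $ j) \<bullet> w $ i)"
    by (simp add: inner_vec_def matrix_vector_mult_def inner_sum_left)
  also have "\<dots> = (\<Sum>j\<in>UNIV. \<Sum>i\<in>UNIV. u $ j \<bullet> (cnj (A $ i $ j) * w $ i))"
    by (subst sum.swap) (simp add: swap_cnj)
  also have "\<dots> = u \<bullet> (conj_transpose A *v w)"
    by (simp add: inner_vec_def matrix_vector_mult_def inner_sum_right conj_transpose_def)
  finally show ?thesis .
qed

lemma stationary_point_Q2_least_squares_iff_ereal_argmin: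
  fixes A :: "'a::{euclidean_space, real_algebra_1, comm_ring_1}^'n^'m" and B :: "'a^'m^'n"
  assumes adjoint: "\<And>u w. (A *v u) \<bullet> w = u \<bullet> (B *v w)" and "\<And>x. f x \<ge> 0"
  shows "stationary_point (\<lambda>x. Q2 f x + ereal ((norm (A *v x - b))\<^sup>2)) x' \<longleftrightarrow>
    x' \<in> ereal_argmin (\<lambda>x. Q2 f x + ereal ((norm (x - ((mat 1 - B ** A) *v x' + B *v b)))\<^sup>2))"
proof -
  have "lsc_convex_envelope (\<lambda>y. f y + ereal ((norm y)\<^sup>2)) x' \<ge> 0"
    using assms(2) by (intro lsc_convex_envelope_nonneg) simp
  then have "lsc_convex_envelope (\<lambda>y. f y + ereal ((norm y)\<^sup>2)) x' \<noteq> -\<infinity>"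
    by auto
  moreover have "(mat 1 - B ** A) *v x' + B *v b = x' - B *v (A *v x' - b)"
    by (simp add: matrix_vector_mult_diff_rdistrib matrix_vector_mult_diff_distrib
        matrix_vector_mul_assoc[symmetric])
  ultimately show ?thesis
    unfolding Q2_def
    using stationary_point_least_squares_iff_ereal_argmin[OF ereal_convex_lsc_convex_envelope _
        matrix_vector_mul_bounded_linear adjoint]
    by simp
qed

theorem proposition3p2:
  shows
   "(\<forall>(A :: real^'n^'m) (b :: real^'m) (f :: real^'n \<Rightarrow> ereal) (x' :: real^'n).
       (\<forall>x. f x \<ge> 0) \<longrightarrow>
       (stationary_point (\<lambda>x. Q2 f x + ereal ((norm (A *v x - b))\<^sup>2)) x' \<longleftrightarrow>
        x' \<in> ereal_argmin (\<lambda>x. Q2 f x +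
              ereal ((norm (x - ((mat 1 - transpose A ** A) *v x' + transpose A *v b)))\<^sup>2))))
    \<and>
    (\<forall>(A :: complex^'n^'m) (b :: complex^'m) (f :: complex^'n \<Rightarrow> ereal) (x' :: complex^'n).
       (\<forall>x. f x \<ge> 0) \<longrightarrow>
       (stationary_point (\<lambda>x. Q2 f x + ereal ((norm (A *v x - b))\<^sup>2)) x' \<longleftrightarrow>
        x' \<in> ereal_argmin (\<lambda>x. Q2 f x +
              ereal ((norm (x - ((mat 1 - conj_transpose A ** A) *v x' + conj_transpose A *v b)))\<^sup>2))))"
  by (intro conjI allI impI stationary_point_Q2_least_squares_iff_ereal_argmin
      inner_matrix_vector_transpose inner_matrix_vector_conj_transpose) simp_all

end
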